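(* Let $X,Y,Z$ be random variables on finite alphabets $\mathcal{X},\mathcal{Y},\mathcal{Z}$, and define the redundant information $\operatorname{Red}(X,Y\to Z)=I(X;Z)-\operatorname{Un}(X\to Z\mid Y)$ with $\operatorname{Un}$ as below. Then $\operatorname{Red}(X,Y\to Z)\ge 0$.
   Context: For each $y\in\mathcal{Y}$ with $\Pr(Y=y)>0$, let $(A_y,B_y,C_y)$ be the random triple on $\mathcal{X}\times\mathcal{Y}\times\mathcal{Z}$ with $\Pr(A_y=x,B_y=y',C_y=z)=0$ if $\Pr(Z=z)=0$ and $\Pr(A_y=x,B_y=y',C_y=z)=\Pr(X=x,Y=y',Z=z)\Pr(Z=z\mid Y=y)/\Pr(Z=z)$ otherwise. The unique information is $\operatorname{Un}(X\to Z\mid Y)=\sum_{y:\Pr(Y=y)>0}\Pr(Y=y)\,I(A_y;C_y)$, where $I$ is mutual information. *)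

theory Defs
  imports "HOL-Probability.Probability"
begin

definition PY :: "('x::finite \<times> 'y::finite \<times> 'z::finite) pmf \<Rightarrow> 'y \<Rightarrow> real" where
  "PY p y = (\<Sum>x\<in>UNIV. \<Sum>z\<in>UNIV. pmf p (x, y, z))"

definition PZ :: "('x::finite \<times> 'y::finite \<times> 'z::finite) pmf \<Rightarrow> 'z \<Rightarrow> real" where
  "PZ p z = (\<Sum>x\<in>UNIV. \<Sum>y\<in>UNIV. pmf p (x, y, z))"

definition PYZ :: "('x::finite \<times> 'y::finite \<times> 'z::finite) pmf \<Rightarrow> 'y \<Rightarrow> 'z \<Rightarrow> real" where
  "PYZ p y z = (\<Sum>x\<in>UNIV. pmf p (x, y, z))"

definition PXZ :: "('x::finite \<times> 'y::finite \<times> 'z::finite) pmf \<Rightarrow> 'x \<Rightarrow> 'z \<Rightarrow> real" where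
  "PXZ p x z = (\<Sum>y\<in>UNIV. pmf p (x, y, z))"

definition PZ_given_Y :: "('x::finite \<times> 'y::finite \<times> 'z::finite) pmf \<Rightarrow> 'z \<Rightarrow> 'y \<Rightarrow> real" where
  "PZ_given_Y p z y = PYZ p y z / PY p y"

definition mutual_info :: "('a::finite \<times> 'c::finite \<Rightarrow> real) \<Rightarrow> real" where
  "mutual_info q = (\<Sum>a\<in>UNIV. \<Sum>c\<in>UNIV.
      (if q (a, c) = 0 then 0
       else q (a, c) * log 2 (q (a, c) / ((\<Sum>c'\<in>UNIV. q (a, c')) * (\<Sum>a'\<in>UNIV. q (a', c))))))"

text \<open>Mass function of the triple (A_y, B_y, C_y).\<close>
definition triple_y :: "('x::finite \<times> 'y::finite \<times> 'z::finite) pmf \<Rightarrow> 'y \<Rightarrow> 'x \<times> 'y \<times> 'z \<Rightarrow> real" where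
  "triple_y p y t = (case t of (x, y', z) \<Rightarrow>
      if PZ p z = 0 then 0 else pmf p (x, y', z) * PZ_given_Y p z y / PZ p z)"

definition unique_info :: "('x::finite \<times> 'y::finite \<times> 'z::finite) pmf \<Rightarrow> real" where
  "unique_info p = (\<Sum>y\<in>{y. PY p y > 0}.
      PY p y * mutual_info (\<lambda>(x, z). \<Sum>y'\<in>UNIV. triple_y p y (x, y', z)))"

definition Red :: "('x::finite \<times> 'y::finite \<times> 'z::finite) pmf \<Rightarrow> real" where
  "Red p = mutual_info (\<lambda>(x, z). PXZ p x z) - unique_info p"

end

theory Submission
  imports Defs
begin

(* Let r_y be the law of X given Y = y in the Markov chain Y - Z - X having the same pair laws
   of (Y, Z) and (X, Z) as p; it is the X-marginal of A_y, and its mixture over P(Y) is P(X).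
   Both I(X;Z) and the terms P(y) I(A_y;C_y) are expectations under this Markov joint law,
   of log P(x|z)/P(x) and of log P(x|z)/r_y(x) respectively.  The terms log P(x|z) cancel, so
   Red(X,Y -> Z) = sum_y P(y) D(r_y || P(X)), which is nonnegative by Gibbs' inequality. *)

definition rel_entropy :: "('a::finite \<Rightarrow> real) \<Rightarrow> ('a \<Rightarrow> real) \<Rightarrow> real" where
  "rel_entropy a b = (\<Sum>x\<in>UNIV. a x * log 2 (a x / b x))"

lemma mult_log_divide_ge:
  fixes a b c :: real
  assumes "1 < c" "0 \<le> a" "0 \<le> b" "0 < a \<Longrightarrow> 0 < b"
  shows "(a - b) / ln c \<le> a * log c (a / b)"
proof (cases "a = 0")
  case True
  then show ?thesis using assms by (simp add: divide_nonpos_pos)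
next
  case False
  with assms have "0 < a" "0 < b" by auto
  then have "ln (b / a) \<le> b / a - 1" by (intro ln_le_minus_one) simp
  moreover have "ln (a / b) = - ln (b / a)" using \<open>0 < a\<close> \<open>0 < b\<close> by (simp add: ln_div)
  ultimately have "a - b \<le> a * ln (a / b)" using \<open>0 < a\<close> by (simp add: field_simps)
  then show ?thesis using assms(1) by (simp add: log_def divide_right_mono)
qed

lemma rel_entropy_nonneg:
  fixes a b :: "'a::finite \<Rightarrow> real"
  assumes "\<And>x. 0 \<le> a x" "\<And>x. 0 \<le> b x" "\<And>x. 0 < a x \<Longrightarrow> 0 < b x"
    and "sum b UNIV \<le> sum a UNIV"
  shows "0 \<le> rel_entropy a b"
proof -
  have "0 \<le> (sum a UNIV - sum b UNIV) / ln 2" using assms(4) by simp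
  also have "\<dots> = (\<Sum>x\<in>UNIV. (a x - b x) / ln 2)"
    by (simp add: sum_subtractf flip: sum_divide_distrib)
  also have "\<dots> \<le> rel_entropy a b"
    unfolding rel_entropy_def by (intro sum_mono mult_log_divide_ge) (auto simp: assms)
  finally show ?thesis .
qed

definition PX :: "('x::finite \<times> 'y::finite \<times> 'z::finite) pmf \<Rightarrow> 'x \<Rightarrow> real" where
  "PX p x = (\<Sum>z\<in>UNIV. PXZ p x z)"

lemma PXZ_nonneg [simp]: "0 \<le> PXZ p x z"
  unfolding PXZ_def by (simp add: sum_nonneg)

lemma PYZ_nonneg [simp]: "0 \<le> PYZ p y z"
  unfolding PYZ_def by (simp add: sum_nonneg)

lemma PY_nonneg [simp]: "0 \<le> PY p y"
  unfolding PY_def by (simp add: sum_nonneg)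

lemma PZ_nonneg [simp]: "0 \<le> PZ p z"
  unfolding PZ_def by (simp add: sum_nonneg)

lemma PX_nonneg [simp]: "0 \<le> PX p x"
  unfolding PX_def by (simp add: sum_nonneg)

lemma PZ_eq_sum_PXZ: "PZ p z = (\<Sum>x\<in>UNIV. PXZ p x z)"
  unfolding PZ_def PXZ_def ..

lemma PZ_eq_sum_PYZ: "PZ p z = (\<Sum>y\<in>UNIV. PYZ p y z)"
  unfolding PZ_def PYZ_def by (rule sum.swap)

lemma PY_eq_sum_PYZ: "PY p y = (\<Sum>z\<in>UNIV. PYZ p y z)"
  unfolding PY_def PYZ_def by (rule sum.swap)

lemma sum_pmf_triple_eq_1:
  fixes p :: "('x::finite \<times> 'y::finite \<times> 'z::finite) pmf"
  shows "(\<Sum>x\<in>UNIV. \<Sum>y\<in>UNIV. \<Sum>z\<in>UNIV. pmf p (x, y, z)) = 1"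
proof -
  have "(\<Sum>x\<in>UNIV. \<Sum>y\<in>UNIV. \<Sum>z\<in>UNIV. pmf p (x, y, z)) = (\<Sum>t\<in>UNIV. pmf p t)"
    by (simp add: sum.cartesian_product flip: UNIV_Times_UNIV)
  also have "\<dots> = 1"
    by (rule sum_pmf_eq_1) auto
  finally show ?thesis .
qed

lemma sum_PX_eq_1:
  fixes p :: "('x::finite \<times> 'y::finite \<times> 'z::finite) pmf"
  shows "(\<Sum>x\<in>UNIV. PX p x) = 1"
proof -
  have "PX p x = (\<Sum>y\<in>UNIV. \<Sum>z\<in>UNIV. pmf p (x, y, z))" for x
    unfolding PX_def PXZ_def by (rule sum.swap)
  then show ?thesis using sum_pmf_triple_eq_1[of p] by simp
qed

lemma PXZ_eq_0_if_PZ_eq_0: "PZ p z = 0 \<Longrightarrow> PXZ p x z = 0"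
  unfolding PZ_eq_sum_PXZ by (simp add: sum_nonneg_eq_0_iff)

lemma PYZ_eq_0_if_PZ_eq_0: "PZ p z = 0 \<Longrightarrow> PYZ p y z = 0"
  unfolding PZ_eq_sum_PYZ by (simp add: sum_nonneg_eq_0_iff)

lemma PYZ_eq_0_if_PY_eq_0: "PY p y = 0 \<Longrightarrow> PYZ p y z = 0"
  unfolding PY_eq_sum_PYZ by (simp add: sum_nonneg_eq_0_iff)

lemma PXZ_eq_0_if_PX_eq_0: "PX p x = 0 \<Longrightarrow> PXZ p x z = 0"
  unfolding PX_def by (simp add: sum_nonneg_eq_0_iff)

text \<open>The Markov chain X - Z - Y with the pair laws of (X, Z) and (Y, Z) taken from p;
  conditioned on Y = y it is the law of (A_y, C_y).\<close>
definition markov_joint :: "('x::finite \<times> 'y::finite \<times> 'z::finite) pmf \<Rightarrow> 'x \<Rightarrow> 'y \<Rightarrow> 'z \<Rightarrow> real" where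
  "markov_joint p x y z = PXZ p x z * PYZ p y z / PZ p z"

definition PX_given_Y_markov :: "('x::finite \<times> 'y::finite \<times> 'z::finite) pmf \<Rightarrow> 'x \<Rightarrow> 'y \<Rightarrow> real" where
  "PX_given_Y_markov p x y = (\<Sum>z\<in>UNIV. markov_joint p x y z) / PY p y"

lemma markov_joint_nonneg [simp]: "0 \<le> markov_joint p x y z"
  unfolding markov_joint_def by simp

lemma PX_given_Y_markov_nonneg [simp]: "0 \<le> PX_given_Y_markov p x y"
  unfolding PX_given_Y_markov_def by (simp add: sum_nonneg)

lemma sum_markov_joint_Y: "(\<Sum>y\<in>UNIV. markov_joint p x y z) = PXZ p x z"
proof (cases "PZ p z = 0")
  case True
  then show ?thesis by (simp add: markov_joint_def PXZ_eq_0_if_PZ_eq_0)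
next
  case False
  then show ?thesis
    by (simp add: markov_joint_def PZ_eq_sum_PYZ[of p z] flip: sum_divide_distrib sum_distrib_left)
qed

lemma sum_markov_joint_X: "(\<Sum>x\<in>UNIV. markov_joint p x y z) = PYZ p y z"
proof (cases "PZ p z = 0")
  case True
  then show ?thesis by (simp add: markov_joint_def PYZ_eq_0_if_PZ_eq_0)
next
  case False
  then show ?thesis
    by (simp add: markov_joint_def PZ_eq_sum_PXZ[of p z] flip: sum_divide_distrib sum_distrib_right)
qed

lemma markov_joint_eq_0_if_PY_eq_0: "PY p y = 0 \<Longrightarrow> markov_joint p x y z = 0"
  by (simp add: markov_joint_def PYZ_eq_0_if_PY_eq_0)

lemma sum_PX_given_Y_markov:
  assumes "PY p y \<noteq> 0"
  shows "(\<Sum>x\<in>UNIV. PX_given_Y_markov p x y) = 1"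
proof -
  have "(\<Sum>x\<in>UNIV. PX_given_Y_markov p x y) = (\<Sum>z\<in>UNIV. \<Sum>x\<in>UNIV. markov_joint p x y z) / PY p y"
    unfolding PX_given_Y_markov_def by (subst sum.swap) (simp flip: sum_divide_distrib)
  also have "\<dots> = 1"
    using assms by (simp add: sum_markov_joint_X flip: PY_eq_sum_PYZ)
  finally show ?thesis .
qed

lemma PX_pos_if_PX_given_Y_markov_pos:
  assumes "0 < PX_given_Y_markov p x y"
  shows "0 < PX p x"
proof -
  have "PX p x \<noteq> 0"
    using assms by (auto simp: PX_given_Y_markov_def markov_joint_def PXZ_eq_0_if_PX_eq_0)
  then show ?thesis
    using PX_nonneg[of p x] by linarith
qed

lemma sum_triple_y: "(\<Sum>y'\<in>UNIV. triple_y p y (x, y', z)) = markov_joint p x y z / PY p y"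
proof (cases "PZ p z = 0")
  case True
  then show ?thesis by (simp add: triple_y_def markov_joint_def PXZ_eq_0_if_PZ_eq_0)
next
  case False
  then show ?thesis
    by (simp add: triple_y_def markov_joint_def PZ_given_Y_def PXZ_def sum_distrib_left
        mult.commute flip: sum_divide_distrib)
qed

lemma mutual_info_PXZ:
  "mutual_info (\<lambda>(x, z). PXZ p x z) =
    (\<Sum>x\<in>UNIV. \<Sum>z\<in>UNIV. PXZ p x z * log 2 (PXZ p x z / (PX p x * PZ p z)))"
  unfolding mutual_info_def prod.case PX_def PZ_eq_sum_PXZ by (intro sum.cong) simp_all

lemma PY_mult_mutual_info_triple_y:
  assumes "PY p y \<noteq> 0"
  shows "PY p y * mutual_info (\<lambda>(x, z). \<Sum>y'\<in>UNIV. triple_y p y (x, y', z)) =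
    (\<Sum>x\<in>UNIV. \<Sum>z\<in>UNIV.
      markov_joint p x y z * log 2 (PXZ p x z / (PZ p z * PX_given_Y_markov p x y)))"
proof -
  have marginal_X: "(\<Sum>z\<in>UNIV. markov_joint p x y z / PY p y) = PX_given_Y_markov p x y" for x
    by (simp add: PX_given_Y_markov_def sum_divide_distrib)
  have marginal_Z: "(\<Sum>x\<in>UNIV. markov_joint p x y z / PY p y) = PYZ p y z / PY p y" for z
    by (simp add: sum_markov_joint_X flip: sum_divide_distrib)
  have summand: "PY p y * (if markov_joint p x y z / PY p y = 0 then 0
        else markov_joint p x y z / PY p y *
          log 2 (markov_joint p x y z / PY p y / (r * (PYZ p y z / PY p y))))
      = markov_joint p x y z * log 2 (PXZ p x z / (PZ p z * r))" for x z r
  proof (cases "markov_joint p x y z = 0")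
    case True
    then show ?thesis by simp
  next
    case False
    then have "PXZ p x z \<noteq> 0" "PYZ p y z \<noteq> 0" "PZ p z \<noteq> 0"
      by (auto simp: markov_joint_def)
    then have "markov_joint p x y z / PY p y / (r * (PYZ p y z / PY p y)) = PXZ p x z / (PZ p z * r)"
      using assms by (simp add: markov_joint_def field_simps)
    with False assms show ?thesis by simp
  qed
  show ?thesis
    unfolding mutual_info_def prod.case sum_triple_y marginal_X marginal_Z sum_distrib_left summand ..
qed

lemma unique_info_eq_sum_markov_joint:
  "unique_info p = (\<Sum>y\<in>{y. 0 < PY p y}. \<Sum>x\<in>UNIV. \<Sum>z\<in>UNIV.
      markov_joint p x y z * log 2 (PXZ p x z / (PZ p z * PX_given_Y_markov p x y)))"
  unfolding unique_info_def by (intro sum.cong) (simp_all add: PY_mult_mutual_info_triple_y)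

lemma mutual_info_PXZ_eq_sum_markov_joint:
  "mutual_info (\<lambda>(x, z). PXZ p x z) = (\<Sum>y\<in>{y. 0 < PY p y}. \<Sum>x\<in>UNIV. \<Sum>z\<in>UNIV.
      markov_joint p x y z * log 2 (PXZ p x z / (PX p x * PZ p z)))"
  (is "_ = (\<Sum>y\<in>?S. \<Sum>x\<in>UNIV. \<Sum>z\<in>UNIV. markov_joint p x y z * ?L x z)")
proof -
  have PXZ_eq: "PXZ p x z = (\<Sum>y\<in>?S. markov_joint p x y z)" for x z
    unfolding sum_markov_joint_Y[symmetric]
    by (rule sum.mono_neutral_right) (auto simp: order.strict_iff_order markov_joint_eq_0_if_PY_eq_0)
  have "mutual_info (\<lambda>(x, z). PXZ p x z) = (\<Sum>x\<in>UNIV. \<Sum>z\<in>UNIV. \<Sum>y\<in>?S. markov_joint p x y z * ?L x z)"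
    unfolding mutual_info_PXZ by (simp only: PXZ_eq[symmetric] flip: sum_distrib_right)
  also have "\<dots> = (\<Sum>x\<in>UNIV. \<Sum>y\<in>?S. \<Sum>z\<in>UNIV. markov_joint p x y z * ?L x z)"
    by (rule sum.cong[OF refl], rule sum.swap)
  also have "\<dots> = (\<Sum>y\<in>?S. \<Sum>x\<in>UNIV. \<Sum>z\<in>UNIV. markov_joint p x y z * ?L x z)"
    by (rule sum.swap)
  finally show ?thesis .
qed

lemma markov_joint_mult_log_diff:
  assumes "0 < PY p y"
  shows "markov_joint p x y z * log 2 (PXZ p x z / (PX p x * PZ p z))
       - markov_joint p x y z * log 2 (PXZ p x z / (PZ p z * PX_given_Y_markov p x y))
     = markov_joint p x y z * log 2 (PX_given_Y_markov p x y / PX p x)"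
proof (cases "markov_joint p x y z = 0")
  case True
  then show ?thesis by simp
next
  case False
  then have "0 < PXZ p x z" "0 < PZ p z"
    by (auto simp: markov_joint_def order.strict_iff_order)
  have "0 < markov_joint p x y z / PY p y"
    using False assms by (simp add: order.strict_iff_order)
  also have "\<dots> \<le> PX_given_Y_markov p x y"
    unfolding PX_given_Y_markov_def using assms
    by (intro divide_right_mono member_le_sum) auto
  finally have "0 < PX_given_Y_markov p x y" .
  moreover from this have "0 < PX p x" by (rule PX_pos_if_PX_given_Y_markov_pos)
  ultimately show ?thesis
    using \<open>0 < PXZ p x z\<close> \<open>0 < PZ p z\<close>
    by (simp add: log_divide log_mult flip: right_diff_distrib)
qed

lemma Red_eq_expected_rel_entropy:
  "Red p = (\<Sum>y\<in>{y. 0 < PY p y}. PY p y * rel_entropy (\<lambda>x. PX_given_Y_markov p x y) (PX p))"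
proof -
  have "Red p = (\<Sum>y\<in>{y. 0 < PY p y}. \<Sum>x\<in>UNIV. \<Sum>z\<in>UNIV.
      markov_joint p x y z * log 2 (PX_given_Y_markov p x y / PX p x))"
    unfolding Red_def mutual_info_PXZ_eq_sum_markov_joint unique_info_eq_sum_markov_joint
    by (simp add: markov_joint_mult_log_diff flip: sum_subtractf)
  also have "\<dots> = (\<Sum>y\<in>{y. 0 < PY p y}. \<Sum>x\<in>UNIV.
      PY p y * (PX_given_Y_markov p x y * log 2 (PX_given_Y_markov p x y / PX p x)))"
    by (intro sum.cong refl) (simp add: PX_given_Y_markov_def flip: sum_distrib_right)
  also have "\<dots> = (\<Sum>y\<in>{y. 0 < PY p y}. PY p y * rel_entropy (\<lambda>x. PX_given_Y_markov p x y) (PX p))"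
    by (simp add: rel_entropy_def sum_distrib_left)
  finally show ?thesis .
qed

lemma rel_entropy_PX_given_Y_markov_nonneg:
  assumes "PY p y \<noteq> 0"
  shows "0 \<le> rel_entropy (\<lambda>x. PX_given_Y_markov p x y) (PX p)"
proof (rule rel_entropy_nonneg)
  show "sum (PX p) UNIV \<le> (\<Sum>x\<in>UNIV. PX_given_Y_markov p x y)"
    using assms by (simp add: sum_PX_given_Y_markov sum_PX_eq_1)
qed (auto intro: PX_pos_if_PX_given_Y_markov_pos)

theorem corollary3:
  fixes p :: "('x::finite \<times> 'y::finite \<times> 'z::finite) pmf"
  shows "0 \<le> Red p"
  unfolding Red_eq_expected_rel_entropy
  by (intro sum_nonneg mult_nonneg_nonneg PY_nonneg rel_entropy_PX_given_Y_markov_nonneg) auto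

end
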